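(* Let $0<\epsilon<1/2$, $C=\lceil\epsilon^{-1}\rceil$ and $c\in\{0,\dots,C-1\}$. Let $G$ be a graph with edge weights $w(e)\ge1$, and let $G^c$, its levels, the level matchings $M^c_l$, the combined matching $\hat{M}^c$ and the sets $\mathcal{R}^c(e)$ be as defined below. Then for every edge $e\in\hat{M}^c$, $$\Phi^c(e)\le(1+3\epsilon)\,w(e),$$ where $\Phi^c(e)=\sum_{e'\in\mathcal{R}^c(e)}w(e')$.
   Context: An edge $e$ is in bucket $b\in\mathbb{Z}$ if $w(e)\in[\epsilon^{-b},\epsilon^{-(b+1)})$. The graph $G^c$ is obtained from $G$ by removing all edges whose bucket $b$ satisfies $b\equiv c\pmod C$. Level $l$ of copy $c$ consists of the edges of $G^c$ in buckets $lC+c+1,\dots,(l+1)C+c-1$. For each level $l$, $M^c_l$ is a matching consisting of level-$l$ edges of $G^c$. The combined matching $\hat{M}^c$ is formed greedily: start from $\emptyset$; for $l$ from the maximum level down to the minimum, add the (remaining) edges of $M^c_l$, and for each $(u,v)\in M^c_l$ remove all edges incident to $u$ or $v$ from every $M^c_{l'}$ with $l'<l$. For $e=(u,v)\in\hat{M}^c$ on level $l$, $\mathcal{R}^c(e)=\{e\}\cup\{(x,y)\in M^c_{l'}: l'<l,\ \{x,y\}\cap\{u,v\}\ne\emptyset\}$ (level matchings taken before removals). *)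

theory Defs
  imports Complex_Main
begin

text \<open>Undirected simple graph: a set E of edges, each edge a 2-element vertex set.
  An edge e lies in bucket b iff w e \<in> [eps^(-b), eps^(-(b+1))).\<close>

definition bucket :: "real \<Rightarrow> ('e \<Rightarrow> real) \<Rightarrow> 'e \<Rightarrow> int" where
  "bucket eps w e = (THE b::int. inverse eps powi b \<le> w e \<and> w e < inverse eps powi (b + 1))"

definition copy_edges :: "real \<Rightarrow> nat \<Rightarrow> nat \<Rightarrow> ('a set \<Rightarrow> real) \<Rightarrow> 'a set set \<Rightarrow> 'a set set" where
  "copy_edges eps C c w E = {e \<in> E. \<not> (bucket eps w e mod int C = int c mod int C)}"

definition level_edges :: "real \<Rightarrow> nat \<Rightarrow> nat \<Rightarrow> ('a set \<Rightarrow> real) \<Rightarrow> 'a set set \<Rightarrow> int \<Rightarrow> 'a set set" where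
  "level_edges eps C c w E l = {e \<in> copy_edges eps C c w E.
      l * int C + int c + 1 \<le> bucket eps w e \<and> bucket eps w e \<le> (l + 1) * int C + int c - 1}"

definition is_matching :: "'a set set \<Rightarrow> bool" where
  "is_matching M \<longleftrightarrow> (\<forall>e\<in>M. \<forall>f\<in>M. e \<noteq> f \<longrightarrow> e \<inter> f = {})"

fun greedy_upto :: "(int \<Rightarrow> 'a set set) \<Rightarrow> int \<Rightarrow> nat \<Rightarrow> 'a set set" where
  "greedy_upto M T 0 = {}"
| "greedy_upto M T (Suc k) =
     greedy_upto M T k \<union> {e \<in> M (T - int k). \<forall>f \<in> greedy_upto M T k. f \<inter> e = {}}"

definition levels :: "real \<Rightarrow> nat \<Rightarrow> nat \<Rightarrow> ('a set \<Rightarrow> real) \<Rightarrow> 'a set set \<Rightarrow> int set" where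
  "levels eps C c w E = {l. level_edges eps C c w E l \<noteq> {}}"

definition combined :: "real \<Rightarrow> nat \<Rightarrow> nat \<Rightarrow> ('a set \<Rightarrow> real) \<Rightarrow> 'a set set
    \<Rightarrow> (int \<Rightarrow> 'a set set) \<Rightarrow> 'a set set" where
  "combined eps C c w E M =
     greedy_upto M (Max (levels eps C c w E))
       (nat (Max (levels eps C c w E) - Min (levels eps C c w E) + 1))"

text \<open>R^c(e) for an edge e on level l (level matchings taken before removals).\<close>
definition Rset :: "(int \<Rightarrow> 'a set set) \<Rightarrow> int \<Rightarrow> 'a set \<Rightarrow> 'a set set" where
  "Rset M l e = {e} \<union> {f. \<exists>l'<l. f \<in> M l' \<and> f \<inter> e \<noteq> {}}"

end

theory Submission
  imports Defs
begin

text \<open>An edge f of R(e) other than e lies on a level l - 1 - k with k \<ge> 0. The buckets of two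
  levels are separated by the gap of the removed bucket class, so w f \<le> eps^(kC+1) w e; and since
  each level matching contains at most two edges meeting e, the total weight besides e is at most
  2 eps w e (1 + eps^C + eps^(2C) + ...) \<le> (8/3) eps w e, since eps^C \<le> 1/4.
  Levels below -1 are empty because all weights are at least 1.\<close>

lemma bucket_bounds:
  assumes "0 < eps" "eps < 1" "0 < w f"
  shows "inverse eps powi bucket eps w f \<le> w f \<and> w f < inverse eps powi (bucket eps w f + 1)"
proof -
  let ?q = "inverse eps"
  have q: "1 < ?q" using assms by (simp add: one_less_inverse)
  define b where "b = \<lfloor>log ?q (w f)\<rfloor>"
  have powr_eq: "?q powr real_of_int k = ?q powi k" for k
    using q assms by (intro powr_real_of_int') auto
  have log_cancel: "?q powr log ?q (w f) = w f"
    using q assms by (intro powr_log_cancel) auto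
  have lower: "?q powi b \<le> w f"
    using powr_mono[of "real_of_int b" "log ?q (w f)" ?q] q
    unfolding b_def powr_eq log_cancel by simp
  have upper: "w f < ?q powi (b + 1)"
    using powr_less_mono[OF _ q, of "log ?q (w f)" "real_of_int (b + 1)"]
    unfolding b_def powr_eq log_cancel by linarith
  have unique: "a = b" if "?q powi a \<le> w f" "w f < ?q powi (a + 1)" for a
  proof -
    have "a < b + 1" "b < a + 1"
      using power_int_increasing[of "b + 1" a ?q] power_int_increasing[of "a + 1" b ?q]
        q lower upper that by (smt (verit))+
    then show ?thesis by linarith
  qed
  have "bucket eps w f = b"
    unfolding bucket_def using lower upper unique by (intro the_equality) blast+
  then show ?thesis using lower upper by simp
qed

lemma bucket_nonneg:
  assumes "0 < eps" "eps < 1" "1 \<le> w f"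
  shows "0 \<le> bucket eps w f"
proof (rule ccontr)
  assume "\<not> 0 \<le> bucket eps w f"
  then have "inverse eps powi (bucket eps w f + 1) \<le> inverse eps powi 0"
    using assms by (intro power_int_increasing) (auto simp: one_le_inverse)
  then show False using bucket_bounds[of eps w f] assms by simp
qed

lemma weight_le_if_bucket_less:
  assumes eps: "0 < eps" "eps < 1" and pos: "0 < w f" "0 < w g"
    and less: "bucket eps w f + int K < bucket eps w g"
  shows "w f \<le> eps ^ K * w g"
proof -
  let ?q = "inverse eps"
  have q: "1 \<le> ?q" using eps by (simp add: one_le_inverse)
  have "w f < ?q powi (bucket eps w f + 1)"
    using bucket_bounds[of eps w f] eps pos by simp
  also have "\<dots> \<le> ?q powi (bucket eps w g - int K)"
    using less q by (intro power_int_increasing) auto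
  also have "\<dots> = ?q powi bucket eps w g * eps ^ K"
    using eps by (simp add: power_int_diff power_inverse field_simps)
  also have "\<dots> \<le> w g * eps ^ K"
    using bucket_bounds[of eps w g] eps pos by (intro mult_right_mono) auto
  finally show ?thesis by (simp add: mult.commute)
qed

lemma level_edges_disjoint:
  assumes "l \<noteq> l'"
  shows "level_edges eps C c w E l \<inter> level_edges eps C c w E l' = {}"
proof -
  have False if "f \<in> level_edges eps C c w E l" "f \<in> level_edges eps C c w E l'" for f
  proof -
    have "l * int C < (l' + 1) * int C" "l' * int C < (l + 1) * int C"
      using that unfolding level_edges_def by auto
    then have "l < l' + 1" "l' < l + 1"
      by (auto simp: mult_less_cancel_right)
    then show False using assms by linarith
  qed
  then show ?thesis by blast
qed

lemma level_edges_empty_below: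
  assumes "0 < eps" "eps < 1" "c \<le> C" "\<forall>f\<in>E. 1 \<le> w f" "l < -1"
  shows "level_edges eps C c w E l = {}"
proof -
  have "(l + 1) * int C \<le> - int C"
    using mult_right_mono[of "l + 1" "-1" "int C"] assms by simp
  then have "bucket eps w f < 0" if "f \<in> level_edges eps C c w E l" for f
    using that assms unfolding level_edges_def by auto
  then show ?thesis
    using bucket_nonneg assms unfolding level_edges_def copy_edges_def by force
qed

lemma weight_le_lower_level:
  assumes eps: "0 < eps" "eps < 1" and pos: "\<forall>f\<in>E. 0 < w f"
    and f: "f \<in> level_edges eps C c w E (l - 1 - int k)"
    and g: "g \<in> level_edges eps C c w E l"
  shows "w f \<le> eps * (eps ^ C) ^ k * w g"
proof -
  have "0 < w f" "0 < w g"
    using f g pos unfolding level_edges_def copy_edges_def by auto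
  moreover have "(l - int k) * int C + int (k * C + 1) = l * int C + 1"
    by (simp add: algebra_simps)
  then have "bucket eps w f + int (k * C + 1) < bucket eps w g"
    using f g unfolding level_edges_def by auto
  ultimately have "w f \<le> eps ^ (k * C + 1) * w g"
    by (rule weight_le_if_bucket_less[OF eps])
  also have "eps ^ (k * C + 1) = eps * (eps ^ C) ^ k"
    unfolding power_mult[symmetric] by (simp add: mult.commute)
  finally show ?thesis .
qed

lemma card_matching_meeting_le:
  assumes "is_matching M" "finite X"
  shows "card {f \<in> M. f \<inter> X \<noteq> {}} \<le> card X"
proof -
  have at_most_one: "card {f \<in> M. x \<in> f} \<le> 1" for x
  proof (cases "finite {f \<in> M. x \<in> f}")
    case True
    then show ?thesis
      using assms(1) unfolding is_matching_def by (auto simp: card_le_Suc0_iff_eq)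
  qed simp
  have "{f \<in> M. f \<inter> X \<noteq> {}} = (\<Union>x\<in>X. {f \<in> M. x \<in> f})" by blast
  then have "card {f \<in> M. f \<inter> X \<noteq> {}} \<le> (\<Sum>x\<in>X. card {f \<in> M. x \<in> f})"
    using card_UN_le[OF assms(2)] by simp
  also have "\<dots> \<le> (\<Sum>x\<in>X. 1)" by (intro sum_mono at_most_one)
  finally show ?thesis by simp
qed

lemma geometric_sum_le:
  fixes r :: real
  assumes "0 \<le> r" "r < 1"
  shows "(\<Sum>k<n. r ^ k) \<le> 1 / (1 - r)"
proof -
  have "(\<Sum>k<n. r ^ k) = (1 - r ^ n) / (1 - r)" using assms by (simp add: sum_gp_strict)
  also have "\<dots> \<le> 1 / (1 - r)" using assms by (intro divide_right_mono) auto
  finally show ?thesis .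
qed

lemma power_le_quarter_if_ceiling_inverse:
  fixes eps :: real
  assumes "0 < eps" "eps < 1/2"
  shows "eps ^ nat \<lceil>1 / eps\<rceil> \<le> 1/4"
proof -
  have "2 < 1 / eps" using assms by (simp add: field_simps)
  then have "2 \<le> nat \<lceil>1 / eps\<rceil>" by linarith
  then have "eps ^ nat \<lceil>1 / eps\<rceil> \<le> eps ^ 2"
    using assms by (intro power_decreasing) auto
  also have "\<dots> \<le> (1/2) ^ 2" using assms by (intro power_mono) auto
  finally show ?thesis by (simp add: power2_eq_square)
qed

lemma Rset_eq_UN_levels:
  assumes "\<forall>l'< -1. M l' = {}"
  shows "Rset M l e = insert e (\<Union>k<nat (l + 1). {f \<in> M (l - 1 - int k). f \<inter> e \<noteq> {}})"
proof -
  have "{f. \<exists>l'<l. f \<in> M l' \<and> f \<inter> e \<noteq> {}}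
      = (\<Union>k<nat (l + 1). {f \<in> M (l - 1 - int k). f \<inter> e \<noteq> {}})" (is "?lhs = ?rhs")
  proof
    show "?lhs \<subseteq> ?rhs"
    proof
      fix f assume "f \<in> ?lhs"
      then obtain l' where l': "l' < l" "f \<in> M l'" "f \<inter> e \<noteq> {}" by blast
      moreover have "-1 \<le> l'"
      proof (rule ccontr)
        assume "\<not> -1 \<le> l'"
        then have "M l' = {}" using assms by simp
        then show False using l'(2) by simp
      qed
      ultimately show "f \<in> ?rhs" by (intro UN_I[of "nat (l - 1 - l')"]) auto
    qed
    show "?rhs \<subseteq> ?lhs"
    proof
      fix f assume "f \<in> ?rhs"
      then obtain k where "k < nat (l + 1)" "f \<in> M (l - 1 - int k)" "f \<inter> e \<noteq> {}" by blast
      then show "f \<in> ?lhs" by (intro CollectI exI[of _ "l - 1 - int k"]) auto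
    qed
  qed
  then show ?thesis unfolding Rset_def by simp
qed

lemma sum_meeting_lower_level_le:
  fixes w :: "'a set \<Rightarrow> real"
  assumes eps: "0 < eps" "eps < 1" and pos: "\<forall>f\<in>E. 0 < w f"
    and match: "is_matching M"
    and lev: "M \<subseteq> level_edges eps C c w E (l - 1 - int k)"
    and e: "e \<in> level_edges eps C c w E l" and fin_e: "finite e"
  shows "(\<Sum>f\<in>{f \<in> M. f \<inter> e \<noteq> {}}. w f)
           \<le> card e * (eps * (eps ^ C) ^ k * w e)"
proof -
  let ?A = "{f \<in> M. f \<inter> e \<noteq> {}}"
  have "(\<Sum>f\<in>?A. w f) \<le> card ?A * (eps * (eps ^ C) ^ k * w e)"
    using weight_le_lower_level[OF eps pos _ e] lev by (intro sum_bounded_above) blast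
  also have "\<dots> \<le> card e * (eps * (eps ^ C) ^ k * w e)"
    using card_matching_meeting_le[OF match fin_e] e pos eps
    unfolding level_edges_def copy_edges_def by (intro mult_right_mono) auto
  finally show ?thesis .
qed

lemma sum_Rset_eq_sum_levels:
  fixes w :: "'a set \<Rightarrow> real"
  assumes finE: "finite E" and lev: "\<forall>l'. M l' \<subseteq> level_edges eps C c w E l'"
    and low: "\<forall>l'< -1. M l' = {}" and e: "e \<in> M l"
  shows "(\<Sum>f\<in>Rset M l e. w f)
           = w e + (\<Sum>k<nat (l + 1). \<Sum>f\<in>{f \<in> M (l - 1 - int k). f \<inter> e \<noteq> {}}. w f)"
proof -
  define A where "A k = {f \<in> M (l - 1 - int k). f \<inter> e \<noteq> {}}" for k
  have A_level: "A k \<subseteq> level_edges eps C c w E (l - 1 - int k)" for k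
    using lev unfolding A_def by blast
  have "e \<notin> A k" for k
    using e lev A_level[of k] level_edges_disjoint[of l "l - 1 - int k" eps C c w E] by auto
  then have "e \<notin> (\<Union>k<nat (l + 1). A k)" by blast
  moreover have "finite (A k)" for k
    using A_level[of k] finite_subset[OF _ finE] unfolding level_edges_def copy_edges_def by blast
  moreover have "A i \<inter> A j = {}" if "i \<noteq> j" for i j
    using A_level[of i] A_level[of j] that
      level_edges_disjoint[of "l - 1 - int i" "l - 1 - int j" eps C c w E] by auto
  moreover have "Rset M l e = insert e (\<Union>k<nat (l + 1). A k)"
    unfolding A_def by (rule Rset_eq_UN_levels[OF low])
  ultimately have "(\<Sum>f\<in>Rset M l e. w f) = w e + (\<Sum>k<nat (l + 1). \<Sum>f\<in>A k. w f)"
    by (simp add: sum.UNION_disjoint)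
  then show ?thesis unfolding A_def .
qed

theorem lemma9:
  fixes eps :: real and C c :: nat and E :: "'a set set" and w :: "'a set \<Rightarrow> real"
    and M :: "int \<Rightarrow> 'a set set" and e :: "'a set" and l :: int
  assumes eps: "0 < eps" "eps < 1/2"
    and C_def: "C = nat \<lceil>1 / eps\<rceil>"
    and c: "c < C"
    and finE: "finite E"
    and edges: "\<forall>f\<in>E. card f = 2"
    and wpos: "\<forall>f\<in>E. w f \<ge> 1"
    and Mlev: "\<forall>l'. M l' \<subseteq> level_edges eps C c w E l'"
    and Mmatch: "\<forall>l'. is_matching (M l')"
    and e_hat: "e \<in> combined eps C c w E M"
    and e_lev: "e \<in> M l"
  shows "(\<Sum>f\<in>Rset M l e. w f) \<le> (1 + 3 * eps) * w e"
proof -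
  have eps1: "0 < eps" "eps < 1" using eps by simp_all
  have pos: "\<forall>f\<in>E. 0 < w f" using wpos by force
  have e: "e \<in> level_edges eps C c w E l" using Mlev e_lev by blast
  then have we: "1 \<le> w e" and card_e: "card e = 2" and fin_e: "finite e"
    using wpos edges card.infinite unfolding level_edges_def copy_edges_def by fastforce+
  have "(\<Sum>k<nat (l + 1). (eps ^ C) ^ k) \<le> 1 / (1 - eps ^ C)"
    using eps power_le_quarter_if_ceiling_inverse[OF eps] C_def by (intro geometric_sum_le) auto
  also have "\<dots> \<le> 4 / 3"
    using power_le_quarter_if_ceiling_inverse[OF eps] C_def by (simp add: field_simps)
  finally have geometric: "(\<Sum>k<nat (l + 1). (eps ^ C) ^ k) \<le> 4 / 3" .
  have "\<forall>l'< -1. M l' = {}"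
    using Mlev level_edges_empty_below[OF eps1 less_imp_le[OF c] wpos] by blast
  then have "(\<Sum>f\<in>Rset M l e. w f)
      = w e + (\<Sum>k<nat (l + 1). \<Sum>f\<in>{f \<in> M (l - 1 - int k). f \<inter> e \<noteq> {}}. w f)"
    by (rule sum_Rset_eq_sum_levels[OF finE Mlev _ e_lev])
  also have "\<dots> \<le> w e + (\<Sum>k<nat (l + 1). 2 * (eps * (eps ^ C) ^ k * w e))"
    using sum_meeting_lower_level_le[OF eps1 pos Mmatch[rule_format] Mlev[rule_format] e fin_e]
    unfolding card_e by (intro add_left_mono sum_mono) simp
  also have "\<dots> = w e + 2 * eps * w e * (\<Sum>k<nat (l + 1). (eps ^ C) ^ k)"
    by (simp add: sum_distrib_left mult_ac)
  also have "\<dots> \<le> w e + 2 * eps * w e * (4 / 3)"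
    using geometric eps we by (intro add_left_mono mult_left_mono) auto
  also have "\<dots> \<le> (1 + 3 * eps) * w e"
    using eps we by (simp add: algebra_simps)
  finally show ?thesis .
qed

end
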